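(* Let $G=S_n$ and $H=S_b\wr S_a$ (the stabiliser of a partition of $\{1,\dots,n\}$ into $a$ blocks of size $b$), where $n=ab$, $a=b+2$ and $b\geqslant 2$. Then $b(G,H)=3$.
   Context: For a subgroup $H\leqslant G$, $H_G=\bigcap_{g\in G}H^g$ is the core of $H$, and $b(G,H)=\min\{|S| : S\subseteq G,\ \bigcap_{g\in S}H^g=H_G\}$. Equivalently here, $b(G,H)$ is the minimal number of partitions of $\{1,\dots,n\}$ into $a$ parts of size $b$ whose common stabiliser in $S_n$ is trivial. *)

theory Defs
  imports "HOL-Library.Disjoint_Sets" "HOL-Combinatorics.Permutations"
begin

definition block_partition :: "nat \<Rightarrow> nat \<Rightarrow> nat \<Rightarrow> nat set set \<Rightarrow> bool" where
  "block_partition n a b P \<longleftrightarrow>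
     partition_on {1..n} P \<and> card P = a \<and> (\<forall>B\<in>P. card B = b)"

definition stabilises :: "(nat \<Rightarrow> nat) \<Rightarrow> nat set set \<Rightarrow> bool" where
  "stabilises s P \<longleftrightarrow> (\<lambda>B. s ` B) ` P = P"

text \<open>Base size b(S_n, S_b wr S_a): least number of partitions of {1..n} into
  a blocks of size b whose common stabiliser in Sym({1..n}) is trivial.\<close>
definition base_size :: "nat \<Rightarrow> nat \<Rightarrow> nat \<Rightarrow> nat" where
  "base_size n a b = (LEAST k. \<exists>S. finite S \<and> card S = k \<and>
       (\<forall>P\<in>S. block_partition n a b P) \<and>
       (\<forall>s. s permutes {1..n} \<and> (\<forall>P\<in>S. stabilises s P) \<longrightarrow> s = id))"

end

theory Submission
  imports Defs
begin

text \<open>Lower bound: two partitions P, Q of {1..n} into b + 2 blocks of size b always have a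
  nontrivial common stabiliser. If a block of P meets a block of Q in two points, their
  transposition is one. Otherwise every block of one partition misses exactly two blocks of the
  other, so the disjointness graph between P and Q is 2-regular, a union of even cycles; rotating
  each cycle by two steps is induced by a permutation of the points.

  Upper bound: view the points as a (b + 2) \<times> b grid and take the rows, the diagonals and the
  rows twisted by a 3-cycle. Row i misses exactly the diagonals i - 1 and i - 2, so a permutation
  preserving rows and diagonals and fixing one point fixes every row and every diagonal, and is
  the identity since a row and a diagonal meet in at most one point. The twist singles out the
  point 1, which must therefore be fixed.\<close>

section \<open>Perfect matchings in 2-regular bipartite multigraphs\<close>

definition two_regular :: "('a \<Rightarrow> 'b \<Rightarrow> nat) \<Rightarrow> 'a set \<Rightarrow> 'b set \<Rightarrow> bool" where
  "two_regular m A B \<longleftrightarrow> (\<forall>x\<in>A. (\<Sum>y\<in>B. m x y) = 2) \<and> (\<forall>y\<in>B. (\<Sum>x\<in>A. m x y) = 2)"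

lemma sum_nat_eq_1_obtains:
  fixes g :: "'a \<Rightarrow> nat"
  assumes "finite B" "(\<Sum>y\<in>B. g y) = 1"
  obtains y where "y \<in> B" "\<And>z. z \<in> B \<Longrightarrow> g z = (if z = y then 1 else 0)"
proof -
  obtain y where y: "y \<in> B" "0 < g y"
    using assms(2) by (metis gr0I sum.neutral zero_neq_one)
  have "g y + (\<Sum>z\<in>B - {y}. g z) = 1"
    using assms(2) sum.remove[OF assms(1) y(1), of g] by simp
  then have "g y = 1" "(\<Sum>z\<in>B - {y}. g z) = 0"
    using y(2) by linarith+
  then have "g y = 1" "\<forall>z\<in>B - {y}. g z = 0"
    using assms(1) by auto
  then show ?thesis using that y(1) by (metis DiffI singletonD)
qed

lemma bij_betw_fun_upd_insert:
  assumes "bij_betw f A B" "x \<notin> A" "y \<notin> B"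
  shows "bij_betw (f(x := y)) (insert x A) (insert y B)"
proof -
  have "bij_betw (f(x := y)) A B"
    using assms(1,2) by (metis bij_betw_cong fun_upd_other)
  then show ?thesis
    using assms(2,3) notIn_Un_bij_betw[of x A "f(x := y)" B] by simp
qed

lemma two_regular_delete_double_edge:
  assumes fin: "finite A" "finite B" and reg: "two_regular m A B"
    and x: "x \<in> A" and y: "y \<in> B" and m2: "m x y = 2"
  shows "two_regular m (A - {x}) (B - {y})"
proof -
  have row_x: "\<forall>v\<in>B - {y}. m x v = 0"
    using reg x m2 fin(2) sum.remove[OF fin(2) y, of "m x"] by (simp add: two_regular_def)
  have col_y: "\<forall>u\<in>A - {x}. m u y = 0"
    using reg y m2 fin(1) sum.remove[OF fin(1) x, of "\<lambda>u. m u y"] by (simp add: two_regular_def)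
  show ?thesis
    using reg x y row_x col_y by (simp add: two_regular_def sum_diff1_nat)
qed

lemma two_regular_contract_edge:
  assumes fin: "finite A" "finite B" and reg: "two_regular m A B"
    and x: "x \<in> A" and y1: "y1 \<in> B" and m1: "m x y1 = 1"
  obtains x' y2 where "x' \<in> A - {x}" "y2 \<in> B - {y1}" "m x y2 = 1" "m x' y1 = 1"
    "two_regular (\<lambda>u v. m u v + (if u = x' \<and> v = y2 then 1 else 0)) (A - {x}) (B - {y1})"
proof -
  have "(\<Sum>v\<in>B - {y1}. m x v) = 1"
    using reg x y1 m1 by (simp add: two_regular_def sum_diff1_nat)
  then obtain y2 where y2: "y2 \<in> B - {y1}"
    and row_x: "\<And>v. v \<in> B - {y1} \<Longrightarrow> m x v = (if v = y2 then 1 else 0)"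
    using sum_nat_eq_1_obtains[of "B - {y1}" "m x"] fin(2) by blast
  have "(\<Sum>u\<in>A - {x}. m u y1) = 1"
    using reg x y1 m1 by (simp add: two_regular_def sum_diff1_nat)
  then obtain x' where x': "x' \<in> A - {x}"
    and col_y1: "\<And>u. u \<in> A - {x} \<Longrightarrow> m u y1 = (if u = x' then 1 else 0)"
    using sum_nat_eq_1_obtains[of "A - {x}" "\<lambda>u. m u y1"] fin(1) by blast
  let ?m' = "\<lambda>u v. m u v + (if u = x' \<and> v = y2 then 1 else 0)"
  have "(\<Sum>v\<in>B - {y1}. ?m' u v) = 2" if u: "u \<in> A - {x}" for u
  proof -
    have "(\<Sum>v\<in>B - {y1}. ?m' u v) = (\<Sum>v\<in>B - {y1}. m u v) + (if u = x' then 1 else 0)"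
      using y2 fin(2) by (simp add: sum.distrib sum.delta)
    then show ?thesis
      using reg u y1 col_y1[OF u] by (auto simp: two_regular_def sum_diff1_nat)
  qed
  moreover have "(\<Sum>u\<in>A - {x}. ?m' u v) = 2" if v: "v \<in> B - {y1}" for v
  proof -
    have "(\<Sum>u\<in>A - {x}. ?m' u v) = (\<Sum>u\<in>A - {x}. m u v) + (if v = y2 then 1 else 0)"
      using x' fin(1) by (simp add: sum.distrib sum.delta)
    then show ?thesis
      using reg v x row_x[OF v] by (auto simp: two_regular_def sum_diff1_nat)
  qed
  ultimately show ?thesis
    using that x' y2 row_x[OF y2] col_y1[OF x'] by (simp add: two_regular_def)
qed

lemma matching_uncontract_edge:
  fixes m :: "'a \<Rightarrow> 'b \<Rightarrow> nat"
  assumes x: "x \<in> A" and y1: "y1 \<in> B" and x': "x' \<in> A - {x}" and y2: "y2 \<in> B - {y1}"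
    and m: "0 < m x y1" "0 < m x y2" "0 < m x' y1"
    and f: "bij_betw f (A - {x}) (B - {y1})"
    and pos: "\<forall>u\<in>A - {x}. 0 < m u (f u) + (if u = x' \<and> f u = y2 then 1 else 0)"
  shows "\<exists>g. bij_betw g A B \<and> (\<forall>u\<in>A. 0 < m u (g u))"
proof -
  have g: "bij_betw (f(x := y1)) A B"
    using bij_betw_fun_upd_insert[OF f, of x y1] x y1 by (simp add: insert_absorb)
  show ?thesis
  proof (cases "0 < m x' (f x')")
    case True
    have "0 < m u ((f(x := y1)) u)" if "u \<in> A" for u
    proof (cases "u = x")
      case False
      then have "0 < m u (f u) + (if u = x' \<and> f u = y2 then 1 else 0)" using pos that by simp
      then show ?thesis using False True by (cases "u = x'") auto
    qed (use m(1) in simp)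
    then show ?thesis using g by blast
  next
    case False
    have "0 < m x' (f x') + (if f x' = y2 then 1 else 0)" using pos x' by auto
    then have fx': "f x' = y2" using False by (auto split: if_splits)
    let ?h = "transpose y1 y2 \<circ> f(x := y1)"
    have "bij_betw ?h A B"
      using bij_betw_trans[OF g permutes_imp_bij[OF permutes_swap_id]] y1 y2 by blast
    moreover have "0 < m u (?h u)" if u: "u \<in> A" for u
    proof -
      have "f u \<noteq> y2" if "u \<in> A - {x, x'}"
        using inj_onD[OF bij_betw_imp_inj_on[OF f], of u x'] that x' fx' by auto
      moreover have "f u \<noteq> y1" if "u \<in> A - {x}"
        using bij_betwE[OF f] that by blast
      ultimately show ?thesis
        using u pos fx' m x' y2 by (cases "u = x"; cases "u = x'") (auto simp: transpose_def)
    qed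
    ultimately show ?thesis by blast
  qed
qed

text \<open>Induction on the number of vertices: a double edge is removed together with its
  endpoints; a simple edge x y1 is contracted, i.e. x and y1 are removed and the other
  neighbours x' of y1 and y2 of x are joined by a new edge. If the matching of the smaller
  graph uses the new edge, it is replaced by the edges x y2 and x' y1.\<close>
lemma two_regular_perfect_matching:
  assumes "finite A" "finite B" "two_regular m A B"
  shows "\<exists>f. bij_betw f A B \<and> (\<forall>x\<in>A. 0 < m x (f x))"
  using assms
proof (induction "card A" arbitrary: A B m rule: less_induct)
  case less
  show ?case
  proof (cases "A = {}")
    case True
    then have "B = {}" using less.prems(3) by (auto simp: two_regular_def)
    then show ?thesis using True by (simp add: bij_betw_def)
  next
    case False
    then obtain x where x: "x \<in> A" by auto
    then have row_x: "(\<Sum>y\<in>B. m x y) = 2" using less.prems(3) by (simp add: two_regular_def)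
    then obtain y1 where y1: "y1 \<in> B" "0 < m x y1" by (metis gr0I sum.neutral zero_neq_numeral)
    have smaller: "card (A - {x}) < card A" using x less.prems(1) by (meson card_Diff1_less)
    have fin: "finite (A - {x})" "finite (B - {y1})" using less.prems(1,2) by auto
    have "m x y1 \<le> 2" using row_x member_le_sum[OF y1(1), of "m x"] less.prems(2) by simp
    then consider "m x y1 = 2" | "m x y1 = 1" using y1(2) by linarith
    then show ?thesis
    proof cases
      case 1
      obtain f where f: "bij_betw f (A - {x}) (B - {y1})" "\<forall>u\<in>A - {x}. 0 < m u (f u)"
        using less.hyps[OF smaller fin two_regular_delete_double_edge[OF less.prems x y1(1) 1]]
        by blast
      have "bij_betw (f(x := y1)) A B"
        using bij_betw_fun_upd_insert[OF f(1), of x y1] x y1(1) by (simp add: insert_absorb)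
      then show ?thesis using f(2) y1(2) by (metis fun_upd_apply insert_Diff insert_iff x)
    next
      case 2
      obtain x' y2 where x': "x' \<in> A - {x}" and y2: "y2 \<in> B - {y1}" and "m x y2 = 1" "m x' y1 = 1"
        and reg': "two_regular (\<lambda>u v. m u v + (if u = x' \<and> v = y2 then 1 else 0))
          (A - {x}) (B - {y1})"
        using two_regular_contract_edge[OF less.prems x y1(1) 2] by blast
      obtain f where "bij_betw f (A - {x}) (B - {y1})"
        and "\<forall>u\<in>A - {x}. 0 < m u (f u) + (if u = x' \<and> f u = y2 then 1 else 0)"
        using less.hyps[OF smaller fin reg'] by blast
      then show ?thesis
        using matching_uncontract_edge[where m = m, OF x y1(1) x' y2 y1(2)]
          \<open>m x y2 = 1\<close> \<open>m x' y1 = 1\<close> by simp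
    qed
  qed
qed

section \<open>Two block partitions have a nontrivial common stabiliser\<close>

lemma block_partitionD:
  assumes "block_partition n a b P"
  shows "finite P" "card P = a" "\<And>B. B \<in> P \<Longrightarrow> card B = b" "\<And>B. B \<in> P \<Longrightarrow> B \<subseteq> {1..n}"
    "\<And>B. B \<in> P \<Longrightarrow> finite B" "\<Union>P = {1..n}" "\<And>B D x. B \<in> P \<Longrightarrow> D \<in> P \<Longrightarrow> x \<in> B \<Longrightarrow> x \<in> D \<Longrightarrow> B = D"
proof -
  have part: "partition_on {1..n} P" using assms by (simp add: block_partition_def)
  show U: "\<Union>P = {1..n}" using partition_onD1[OF part] by simp
  then show sub: "\<And>B. B \<in> P \<Longrightarrow> B \<subseteq> {1..n}" by auto
  then show "\<And>B. B \<in> P \<Longrightarrow> finite B" by (meson finite_atLeastAtMost finite_subset)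
  show "finite P" using U by (metis finite_UnionD finite_atLeastAtMost)
  show "card P = a" "\<And>B. B \<in> P \<Longrightarrow> card B = b" using assms by (auto simp: block_partition_def)
  show "\<And>B D x. B \<in> P \<Longrightarrow> D \<in> P \<Longrightarrow> x \<in> B \<Longrightarrow> x \<in> D \<Longrightarrow> B = D"
    using partition_onD2[OF part] unfolding disjoint_def by blast
qed

lemma card_eq_sum_card_Int_blocks:
  assumes "block_partition n a b Q" "B \<subseteq> {1..n}"
  shows "card B = (\<Sum>C\<in>Q. card (B \<inter> C))"
proof -
  note Q = block_partitionD[OF assms(1)]
  have "B = (\<Union>C\<in>Q. B \<inter> C)" using Q(6) assms(2) by auto
  moreover have "card (\<Union>C\<in>Q. B \<inter> C) = (\<Sum>C\<in>Q. card (B \<inter> C))"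
    using Q(1,5,7) by (intro card_UN_disjoint) auto
  ultimately show ?thesis by simp
qed

lemma card_blocks_disjoint_eq_2:
  assumes P: "block_partition n a b P" and Q: "block_partition n a b Q" and "a = b + 2"
    and B: "B \<in> P" and cells: "\<forall>C\<in>Q. card (B \<inter> C) \<le> 1"
  shows "card {C\<in>Q. B \<inter> C = {}} = 2"
proof -
  note P' = block_partitionD[OF P] and Q' = block_partitionD[OF Q]
  have "of_bool (B \<inter> C = {}) + card (B \<inter> C) = 1" if "C \<in> Q" for C
    using cells that P'(5)[OF B] by (cases "card (B \<inter> C)") auto
  then have "(\<Sum>C\<in>Q. of_bool (B \<inter> C = {})) + (\<Sum>C\<in>Q. card (B \<inter> C)) = card Q"
    by (simp add: sum.distrib[symmetric])
  moreover have "(\<Sum>C\<in>Q. card (B \<inter> C)) = b"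
    using card_eq_sum_card_Int_blocks[OF Q P'(4)[OF B]] P'(3)[OF B] by simp
  ultimately show ?thesis
    using Q'(1,2) assms(3) by (simp add: Int_def)
qed

lemma transpose_stabilises:
  assumes "partition_on X P" "B \<in> P" "x \<in> B" "y \<in> B"
  shows "stabilises (transpose x y) P"
proof -
  have "transpose x y ` D = D" if "D \<in> P" for D
  proof -
    have "x \<in> D \<longleftrightarrow> y \<in> D"
      using partition_onD2[OF assms(1)] assms(2-4) that by (auto simp: disjoint_def)
    then show ?thesis by simp
  qed
  then show ?thesis unfolding stabilises_def by simp
qed

lemma disjoint_block_matching:
  assumes P: "block_partition n a b P" and Q: "block_partition n a b Q" and ab: "a = b + 2"
    and cells: "\<forall>B\<in>P. \<forall>C\<in>Q. card (B \<inter> C) \<le> 1"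
  obtains f where "bij_betw f P Q" "\<And>B. B \<in> P \<Longrightarrow> B \<inter> f B = {}"
proof -
  note P' = block_partitionD[OF P] and Q' = block_partitionD[OF Q]
  have "card {C\<in>Q. B \<inter> C = {}} = 2" if "B \<in> P" for B
    using card_blocks_disjoint_eq_2[OF P Q ab that] cells that by blast
  moreover have "card {B\<in>P. B \<inter> C = {}} = 2" if "C \<in> Q" for C
    using card_blocks_disjoint_eq_2[OF Q P ab that] cells that by (simp add: Int_commute)
  ultimately have "two_regular (\<lambda>B C. of_bool (B \<inter> C = {})) P Q"
    using P'(1) Q'(1) by (simp add: two_regular_def Int_def)
  then obtain f where "bij_betw f P Q" and "\<forall>B\<in>P. 0 < (of_bool (B \<inter> f B = {}) :: nat)"
    using two_regular_perfect_matching[OF P'(1) Q'(1)] by blast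
  then show ?thesis using that by simp
qed

lemma disjoint_block_bijections:
  assumes P: "block_partition n a b P" and Q: "block_partition n a b Q" and ab: "a = b + 2"
    and cells: "\<forall>B\<in>P. \<forall>C\<in>Q. card (B \<inter> C) \<le> 1"
  obtains f g where "bij_betw f P Q" "bij_betw g P Q"
    "\<And>B. B \<in> P \<Longrightarrow> {C\<in>Q. B \<inter> C = {}} = {f B, g B}" "\<And>B. B \<in> P \<Longrightarrow> f B \<noteq> g B"
proof -
  note P' = block_partitionD[OF P] and Q' = block_partitionD[OF Q]
  obtain f where f: "bij_betw f P Q" and f_disj: "\<And>B. B \<in> P \<Longrightarrow> B \<inter> f B = {}"
    using disjoint_block_matching[OF P Q ab cells] by blast
  have rows: "card {C\<in>Q. B \<inter> C = {}} = 2" if "B \<in> P" for B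
    using card_blocks_disjoint_eq_2[OF P Q ab that] cells that by blast
  have cols: "card {B\<in>P. B \<inter> C = {}} = 2" if "C \<in> Q" for C
    using card_blocks_disjoint_eq_2[OF Q P ab that] cells that by (simp add: Int_commute)
  define g where "g B = the_elem ({C\<in>Q. B \<inter> C = {}} - {f B})" for B
  have g: "{C\<in>Q. B \<inter> C = {}} = {f B, g B} \<and> f B \<noteq> g B" if B: "B \<in> P" for B
  proof -
    have fB: "f B \<in> {C\<in>Q. B \<inter> C = {}}" using f_disj[OF B] bij_betw_apply[OF f B] by blast
    then have "card ({C\<in>Q. B \<inter> C = {}} - {f B}) = 1" using rows[OF B] by simp
    then obtain C where C: "{C\<in>Q. B \<inter> C = {}} - {f B} = {C}" by (rule card_1_singletonE)
    then have "g B = C" by (simp add: g_def)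
    moreover have "{C\<in>Q. B \<inter> C = {}} = {f B, C}" "f B \<noteq> C" using fB C by blast+
    ultimately show ?thesis by simp
  qed
  have "inj_on g P"
  proof (rule inj_onI)
    fix B B' assume B: "B \<in> P" and B': "B' \<in> P" and eq: "g B = g B'"
    let ?C = "g B" and ?B0 = "inv_into P f (g B)"
    have C: "?C \<in> Q" using g[OF B] by blast
    have B0: "?B0 \<in> P" "f ?B0 = ?C"
      using f C by (auto simp: bij_betw_def inv_into_into f_inv_into_f)
    have "{B, B', ?B0} \<subseteq> {D\<in>P. D \<inter> ?C = {}}"
      using g[OF B] g[OF B'] eq B B' B0 f_disj[OF B0(1)] by auto
    then have "card {B, B', ?B0} \<le> card {D\<in>P. D \<inter> ?C = {}}"
      by (rule card_mono[rotated]) (simp add: P'(1))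
    then have "card {B, B', ?B0} \<le> 2" using cols[OF C] by simp
    moreover have "?B0 \<noteq> B" "?B0 \<noteq> B'" using g[OF B] g[OF B'] B0(2) eq by auto
    ultimately show "B = B'" by (cases "B = B'") simp_all
  qed
  moreover have "g ` P = Q"
  proof (rule card_subset_eq[OF Q'(1)])
    show "g ` P \<subseteq> Q" using g by blast
    show "card (g ` P) = card Q" using card_image[OF \<open>inj_on g P\<close>] P'(2) Q'(2) by simp
  qed
  ultimately have "bij_betw g P Q" by (simp add: bij_betw_def)
  then show ?thesis using that f g by blast
qed

definition block_of :: "'a set set \<Rightarrow> 'a \<Rightarrow> 'a set" where
  "block_of P x = (THE B. B \<in> P \<and> x \<in> B)"

lemma block_of_eq:
  assumes "partition_on X P" "B \<in> P" "x \<in> B"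
  shows "block_of P x = B"
  unfolding block_of_def
  using partition_onD2[OF assms(1)] assms(2,3) by (intro the_equality) (auto simp: disjoint_def)

lemma block_of_mem:
  assumes "partition_on X P" "x \<in> X"
  shows "block_of P x \<in> P" "x \<in> block_of P x"
proof -
  obtain B where "B \<in> P" "x \<in> B" using partition_onD1[OF assms(1)] assms(2) by blast
  then show "block_of P x \<in> P" "x \<in> block_of P x" using block_of_eq[OF assms(1)] by simp_all
qed

lemma cell_map_inj_on:
  assumes P: "block_partition n a b P" and Q: "block_partition n a b Q"
    and cells: "\<forall>B\<in>P. \<forall>C\<in>Q. card (B \<inter> C) \<le> 1"
    and \<sigma>: "bij_betw \<sigma> P P" and \<tau>: "bij_betw \<tau> Q Q"
    and cell: "\<And>x. x \<in> {1..n} \<Longrightarrow> \<sigma> (block_of P x) \<inter> \<tau> (block_of Q x) = {s x}"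
  shows "inj_on s {1..n}"
proof (rule inj_onI)
  note P' = block_partitionD[OF P] and Q' = block_partitionD[OF Q]
  have partP: "partition_on {1..n} P" and partQ: "partition_on {1..n} Q"
    using P Q by (simp_all add: block_partition_def)
  fix x y assume x: "x \<in> {1..n}" and y: "y \<in> {1..n}" and eq: "s x = s y"
  note Bx = block_of_mem[OF partP x] and By = block_of_mem[OF partP y]
  note Cx = block_of_mem[OF partQ x] and Cy = block_of_mem[OF partQ y]
  have "\<sigma> (block_of P x) = \<sigma> (block_of P y)"
    using P'(7)[OF bij_betw_apply[OF \<sigma> Bx(1)] bij_betw_apply[OF \<sigma> By(1)], of "s x"]
      cell[OF x] cell[OF y] eq
    by blast
  then have B: "block_of P x = block_of P y" using inj_onD[OF bij_betw_imp_inj_on[OF \<sigma>]] Bx(1) By(1)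
    by blast
  have "\<tau> (block_of Q x) = \<tau> (block_of Q y)"
    using Q'(7)[OF bij_betw_apply[OF \<tau> Cx(1)] bij_betw_apply[OF \<tau> Cy(1)], of "s x"]
      cell[OF x] cell[OF y] eq
    by blast
  then have C: "block_of Q x = block_of Q y" using inj_onD[OF bij_betw_imp_inj_on[OF \<tau>]] Cx(1) Cy(1)
    by blast
  have "{x, y} \<subseteq> block_of P x \<inter> block_of Q x" using Bx By Cx Cy B C by auto
  then have "card {x, y} \<le> card (block_of P x \<inter> block_of Q x)"
    using P'(5)[OF Bx(1)] by (intro card_mono) auto
  also have "\<dots> \<le> 1" using cells Bx(1) Cx(1) by blast
  finally show "x = y" by (cases "x = y") auto
qed

lemma image_eq_of_card_eq:
  assumes "inj_on s X" "D \<subseteq> X" "finite E" "card E = card D" "\<And>x. x \<in> D \<Longrightarrow> s x \<in> E"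
  shows "s ` D = E"
proof (rule card_subset_eq)
  show "s ` D \<subseteq> E" using assms(5) by blast
  show "card (s ` D) = card E" using card_image[OF inj_on_subset[OF assms(1,2)]] assms(4) by simp
qed (fact assms(3))

text \<open>When all cells B \<inter> C are at most singletons, a pair of bijections of the blocks which
  preserves which cells are empty is induced by a permutation of the points: each point is the
  unique point of its cell, and goes to the unique point of the image cell.\<close>
lemma cell_permutation:
  assumes P: "block_partition n a b P" and Q: "block_partition n a b Q"
    and cells: "\<forall>B\<in>P. \<forall>C\<in>Q. card (B \<inter> C) \<le> 1"
    and \<sigma>: "bij_betw \<sigma> P P" and \<tau>: "bij_betw \<tau> Q Q"
    and meets: "\<And>B C. B \<in> P \<Longrightarrow> C \<in> Q \<Longrightarrow> \<sigma> B \<inter> \<tau> C = {} \<longleftrightarrow> B \<inter> C = {}"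
  obtains s where "s permutes {1..n}" "\<And>B. B \<in> P \<Longrightarrow> s ` B = \<sigma> B" "\<And>C. C \<in> Q \<Longrightarrow> s ` C = \<tau> C"
proof -
  note P' = block_partitionD[OF P] and Q' = block_partitionD[OF Q]
  have partP: "partition_on {1..n} P" and partQ: "partition_on {1..n} Q"
    using P Q by (simp_all add: block_partition_def)
  define s where
    "s x = (if x \<in> {1..n} then the_elem (\<sigma> (block_of P x) \<inter> \<tau> (block_of Q x)) else x)" for x
  have cell: "\<sigma> (block_of P x) \<inter> \<tau> (block_of Q x) = {s x}" if x: "x \<in> {1..n}" for x
  proof -
    note BP = block_of_mem[OF partP x] and CQ = block_of_mem[OF partQ x]
    have "\<sigma> (block_of P x) \<in> P" "\<tau> (block_of Q x) \<in> Q"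
      using bij_betw_apply[OF \<sigma> BP(1)] bij_betw_apply[OF \<tau> CQ(1)] .
    then have "card (\<sigma> (block_of P x) \<inter> \<tau> (block_of Q x)) \<le> 1" "finite (\<sigma> (block_of P x))"
      using cells P'(5) by auto
    moreover have "\<sigma> (block_of P x) \<inter> \<tau> (block_of Q x) \<noteq> {}" using meets BP CQ by blast
    ultimately have "card (\<sigma> (block_of P x) \<inter> \<tau> (block_of Q x)) = 1"
      using card_gt_0_iff[of "\<sigma> (block_of P x) \<inter> \<tau> (block_of Q x)"] by simp
    then obtain z where "\<sigma> (block_of P x) \<inter> \<tau> (block_of Q x) = {z}" by (rule card_1_singletonE)
    then show ?thesis using x by (simp add: s_def)
  qed
  have inj: "inj_on s {1..n}" by (rule cell_map_inj_on[OF P Q cells \<sigma> \<tau> cell])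
  moreover have "s ` {1..n} \<subseteq> {1..n}"
    using cell P'(4) bij_betw_apply[OF \<sigma> block_of_mem(1)[OF partP]] by blast
  ultimately have "bij_betw s {1..n} {1..n}"
    by (simp add: bij_betw_def endo_inj_surj)
  then have perm: "s permutes {1..n}"
    by (rule bij_imp_permutes) (simp add: s_def del: atLeastAtMost_iff)
  show ?thesis
  proof (rule that[OF perm])
    show "s ` B = \<sigma> B" if B: "B \<in> P" for B
    proof (rule image_eq_of_card_eq[OF inj P'(4)[OF B]])
      show "finite (\<sigma> B)" "card (\<sigma> B) = card B" using bij_betw_apply[OF \<sigma> B] P'(3,5) B by simp_all
      show "s x \<in> \<sigma> B" if "x \<in> B" for x
        using cell[of x] block_of_eq[OF partP B that] P'(4)[OF B] that by blast
    qed
    show "s ` C = \<tau> C" if C: "C \<in> Q" for C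
    proof (rule image_eq_of_card_eq[OF inj Q'(4)[OF C]])
      show "finite (\<tau> C)" "card (\<tau> C) = card C" using bij_betw_apply[OF \<tau> C] Q'(3,5) C by simp_all
      show "s x \<in> \<tau> C" if "x \<in> C" for x
        using cell[of x] block_of_eq[OF partQ C that] Q'(4)[OF C] that by blast
    qed
  qed
qed

lemma rotation_preserves_disjointness:
  assumes f: "bij_betw f P Q" and g: "bij_betw g P Q"
    and disj: "\<And>B. B \<in> P \<Longrightarrow> {C\<in>Q. B \<inter> C = {}} = {f B, g B}"
    and B: "B \<in> P" and C: "C \<in> Q"
  shows "inv_into P g (f B) \<inter> f (inv_into P g C) = {} \<longleftrightarrow> B \<inter> C = {}"
proof -
  let ?g' = "inv_into P g"
  have g': "bij_betw ?g' Q P" using g by (rule bij_betw_inv_into)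
  have disj_iff: "B \<inter> C = {} \<longleftrightarrow> C = f B \<or> C = g B" if "B \<in> P" "C \<in> Q" for B C
  proof -
    have "B \<inter> C = {} \<longleftrightarrow> C \<in> {C\<in>Q. B \<inter> C = {}}" using that(2) by simp
    then show ?thesis unfolding disj[OF that(1)] by simp
  qed
  have f_eq_iff: "f B = f B' \<longleftrightarrow> B = B'" if "B \<in> P" "B' \<in> P" for B B'
    using inj_on_eq_iff[OF bij_betw_imp_inj_on[OF f] that] .
  have g'_eq_iff: "?g' C = ?g' C' \<longleftrightarrow> C = C'" if "C \<in> Q" "C' \<in> Q" for C C'
    using inj_on_eq_iff[OF bij_betw_imp_inj_on[OF g'] that] .
  have fB: "f B \<in> Q" and gB: "g B \<in> Q" and g'C: "?g' C \<in> P"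
    using bij_betw_apply[OF f B] bij_betw_apply[OF g B] bij_betw_apply[OF g' C] .
  have "?g' (f B) \<inter> f (?g' C) = {} \<longleftrightarrow> f (?g' C) = f (?g' (f B)) \<or> f (?g' C) = g (?g' (f B))"
    using disj_iff[OF bij_betw_apply[OF g' fB] bij_betw_apply[OF f g'C]] .
  also have "\<dots> \<longleftrightarrow> ?g' C = ?g' (f B) \<or> ?g' C = ?g' (g B)"
    using f_eq_iff[OF g'C bij_betw_apply[OF g' fB]] f_eq_iff[OF g'C B]
      bij_betw_inv_into_right[OF g fB] bij_betw_inv_into_left[OF g B] by simp
  also have "\<dots> \<longleftrightarrow> C = f B \<or> C = g B"
    using g'_eq_iff[OF C fB] g'_eq_iff[OF C gB] by simp
  also have "\<dots> \<longleftrightarrow> B \<inter> C = {}" using disj_iff[OF B C] by simp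
  finally show ?thesis .
qed

text \<open>The graph joining B \<in> P to the two blocks of Q disjoint from it is 2-regular; writing its
  edges as two perfect matchings f and g, the maps g\<inverse> \<circ> f on P and f \<circ> g\<inverse> on Q rotate every
  cycle of the graph by two steps, hence preserve disjointness and move every block.\<close>
lemma small_cells_common_stabiliser:
  assumes P: "block_partition n a b P" and Q: "block_partition n a b Q" and ab: "a = b + 2"
    and cells: "\<forall>B\<in>P. \<forall>C\<in>Q. card (B \<inter> C) \<le> 1"
  shows "\<exists>s. s permutes {1..n} \<and> stabilises s P \<and> stabilises s Q \<and> s \<noteq> id"
proof -
  obtain f g where f: "bij_betw f P Q" and g: "bij_betw g P Q"
    and disj: "\<And>B. B \<in> P \<Longrightarrow> {C\<in>Q. B \<inter> C = {}} = {f B, g B}" and fg: "\<And>B. B \<in> P \<Longrightarrow> f B \<noteq> g B"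
    using disjoint_block_bijections[OF P Q ab cells] by blast
  let ?\<sigma> = "inv_into P g \<circ> f" and ?\<tau> = "f \<circ> inv_into P g"
  have \<sigma>: "bij_betw ?\<sigma> P P" using bij_betw_trans[OF f bij_betw_inv_into[OF g]] .
  have \<tau>: "bij_betw ?\<tau> Q Q" using bij_betw_trans[OF bij_betw_inv_into[OF g] f] .
  obtain s where s: "s permutes {1..n}"
    and sP: "\<And>B. B \<in> P \<Longrightarrow> s ` B = ?\<sigma> B" and sQ: "\<And>C. C \<in> Q \<Longrightarrow> s ` C = ?\<tau> C"
    using cell_permutation[OF P Q cells \<sigma> \<tau>] rotation_preserves_disjointness[OF f g disj] by auto
  have "(\<lambda>B. s ` B) ` P = ?\<sigma> ` P" using sP by (rule image_cong[OF refl])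
  then have "stabilises s P" using bij_betw_imp_surj_on[OF \<sigma>] by (simp add: stabilises_def)
  moreover have "(\<lambda>C. s ` C) ` Q = ?\<tau> ` Q" using sQ by (rule image_cong[OF refl])
  then have "stabilises s Q" using bij_betw_imp_surj_on[OF \<tau>] by (simp add: stabilises_def)
  moreover have "s \<noteq> id"
  proof
    assume "s = id"
    have "P \<noteq> {}" using block_partitionD(2)[OF P] ab by auto
    then obtain B where B: "B \<in> P" by blast
    then have "inv_into P g (f B) = B" using sP[OF B] \<open>s = id\<close> by simp
    then have "f B = g B" using bij_betw_inv_into_right[OF g bij_betw_apply[OF f B]] by metis
    then show False using fg[OF B] by simp
  qed
  ultimately show ?thesis using s by blast
qed

lemma two_block_partitions_common_stabiliser:
  assumes P: "block_partition n a b P" and Q: "block_partition n a b Q" and ab: "a = b + 2"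
  shows "\<exists>s. s permutes {1..n} \<and> stabilises s P \<and> stabilises s Q \<and> s \<noteq> id"
proof (cases "\<forall>B\<in>P. \<forall>C\<in>Q. card (B \<inter> C) \<le> 1")
  case True
  then show ?thesis using small_cells_common_stabiliser[OF P Q ab] by blast
next
  case False
  then obtain B C where BC: "B \<in> P" "C \<in> Q" "\<not> card (B \<inter> C) \<le> 1" by blast
  have "finite (B \<inter> C)" using block_partitionD(5)[OF P BC(1)] by simp
  then obtain x y where xy: "x \<in> B \<inter> C" "y \<in> B \<inter> C" "x \<noteq> y"
    using BC(3) card_le_Suc0_iff_eq by (metis One_nat_def)
  have "x \<in> {1..n}" "y \<in> {1..n}" using xy block_partitionD(4)[OF P BC(1)] by auto
  then have "transpose x y permutes {1..n}" by (rule permutes_swap_id)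
  moreover have "stabilises (transpose x y) P" "stabilises (transpose x y) Q"
    using transpose_stabilises[of "{1..n}"] BC(1,2) xy P Q by (simp_all add: block_partition_def)
  moreover have "transpose x y \<noteq> id"
  proof
    assume "transpose x y = id"
    then have "transpose x y x = x" by simp
    then show False using xy(3) by simp
  qed
  ultimately show ?thesis by blast
qed

section \<open>Three block partitions with trivial common stabiliser\<close>

definition fibres :: "nat \<Rightarrow> nat \<Rightarrow> (nat \<Rightarrow> nat) \<Rightarrow> nat set set" where
  "fibres n a L = (\<lambda>i. {x\<in>{1..n}. L x = i}) ` {..<a}"

lemma block_partition_fibres:
  assumes "0 < b" "\<forall>x\<in>{1..n}. L x < a" "\<forall>i<a. card {x\<in>{1..n}. L x = i} = b"
  shows "block_partition n a b (fibres n a L)"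
proof -
  define F where "F i = {x\<in>{1..n}. L x = i}" for i
  have ne: "F i \<noteq> {}" if "i < a" for i
  proof -
    have "card (F i) = b" using assms(3) that unfolding F_def by blast
    then show ?thesis using assms(1) by auto
  qed
  have "inj_on F {..<a}"
  proof (rule inj_onI)
    fix i j assume "i \<in> {..<a}" and eq: "F i = F j"
    then obtain x where "x \<in> F i" using ne by blast
    then have "x \<in> F j" using eq by simp
    then show "i = j" using \<open>x \<in> F i\<close> by (simp add: F_def)
  qed
  then have "card (F ` {..<a}) = a" by (simp add: card_image)
  moreover have "partition_on {1..n} (F ` {..<a})"
  proof (rule partition_onI)
    show "\<Union> (F ` {..<a}) = {1..n}" using assms(2) by (auto simp: F_def)
    show "disjnt B B'" if "B \<in> F ` {..<a}" "B' \<in> F ` {..<a}" "B \<noteq> B'" for B B'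
      using that by (auto simp: F_def disjnt_def)
    show "{} \<notin> F ` {..<a}" using ne by blast
  qed
  moreover have "\<forall>B\<in>F ` {..<a}. card B = b" using assms(3) by (simp add: F_def)
  moreover have "fibres n a L = F ` {..<a}" by (simp add: fibres_def F_def)
  ultimately show ?thesis by (simp add: block_partition_def)
qed

definition preserves_fibres :: "('a \<Rightarrow> 'a) \<Rightarrow> 'a set \<Rightarrow> ('a \<Rightarrow> 'b) \<Rightarrow> bool" where
  "preserves_fibres s S L \<longleftrightarrow> (\<forall>x\<in>S. \<forall>y\<in>S. L (s x) = L (s y) \<longleftrightarrow> L x = L y)"

lemma preserves_fibresD:
  "preserves_fibres s S L \<Longrightarrow> x \<in> S \<Longrightarrow> y \<in> S \<Longrightarrow> L (s x) = L (s y) \<longleftrightarrow> L x = L y"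
  unfolding preserves_fibres_def by blast

lemma stabilises_fibres_imp_preserves_fibres:
  assumes s: "s permutes {1..n}" and stab: "stabilises s (fibres n a L)" and L: "\<forall>x\<in>{1..n}. L x < a"
  shows "preserves_fibres s {1..n} L"
  unfolding preserves_fibres_def
proof (intro ballI)
  fix x y assume x: "x \<in> {1..n}" and y: "y \<in> {1..n}"
  define F where "F = {z\<in>{1..n}. L z = L x}"
  have "F \<in> fibres n a L" using L x unfolding fibres_def F_def by blast
  then have "s ` F \<in> fibres n a L" using stab unfolding stabilises_def by blast
  then obtain j where j: "s ` F = {z\<in>{1..n}. L z = j}" unfolding fibres_def by blast
  have "s x \<in> s ` F" using x unfolding F_def by blast
  then have sx: "L (s x) = j" unfolding j by simp
  have "L x = L y \<longleftrightarrow> y \<in> F" using y unfolding F_def by auto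
  also have "\<dots> \<longleftrightarrow> s y \<in> s ` F" using inj_image_mem_iff[OF permutes_inj[OF s]] by simp
  also have "\<dots> \<longleftrightarrow> L (s y) = j" using y permutes_in_image[OF s, of y] unfolding j by simp
  finally show "L (s x) = L (s y) \<longleftrightarrow> L x = L y" using sx by auto
qed

text \<open>Point x of {1..(b+2)b} is identified with the pair (i, k), i < b + 2, k < b, where
  x = i b + k + 1; the three partitions of the upper bound are its rows i, its diagonals
  i + k mod (b + 2), and the rows twisted by the 3-cycle which moves the points (0,0), (1,0), (2,1)
  into rows 2, 0, 1 respectively.\<close>
definition row_of :: "nat \<Rightarrow> nat \<Rightarrow> nat" where
  "row_of b x = (x - 1) div b"

definition diag_of :: "nat \<Rightarrow> nat \<Rightarrow> nat" where
  "diag_of b x = ((x - 1) div b + (x - 1) mod b) mod (b + 2)"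

definition twist :: "nat \<Rightarrow> nat \<Rightarrow> nat" where
  "twist b = transpose 1 (b + 1) \<circ> transpose 1 (2 * b + 2)"

definition twisted_row_of :: "nat \<Rightarrow> nat \<Rightarrow> nat" where
  "twisted_row_of b x = row_of b (twist b x)"

lemma point_code_mem:
  fixes b i k :: nat
  assumes "i < b + 2" "k < b"
  shows "i * b + k + 1 \<in> {1..(b + 2) * b}"
proof -
  have "i * b + k + 1 \<le> (i + 1) * b" using assms(2) by simp
  also have "\<dots> \<le> (b + 2) * b" using assms(1) by (intro mult_le_mono1) simp
  finally show ?thesis by simp
qed

lemma point_codeE:
  fixes b x :: nat
  assumes "0 < b" "x \<in> {1..(b + 2) * b}"
  obtains i k where "i < b + 2" "k < b" "x = i * b + k + 1"
proof
  show "(x - 1) div b < b + 2" using assms(2) by (intro less_mult_imp_div_less) auto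
  show "(x - 1) mod b < b" using assms(1) by simp
  show "x = (x - 1) div b * b + (x - 1) mod b + 1" using assms(2) by simp
qed

lemma row_of_code: "k < b \<Longrightarrow> row_of b (i * b + k + 1) = i"
  by (simp add: row_of_def)

lemma diag_of_code:
  assumes "i < b + 2" "k < b"
  shows "diag_of b (i * b + k + 1) = (if i + k < b + 2 then i + k else i + k - (b + 2))"
proof -
  have "diag_of b (i * b + k + 1) = (i + k) mod (b + 2)"
    using assms(2) by (simp add: diag_of_def)
  also have "\<dots> = (if i + k < b + 2 then i + k else i + k - (b + 2))"
    using assms by (simp add: mod_if)
  finally show ?thesis .
qed

lemma row_diag_of_special:
  fixes b :: nat
  assumes "2 \<le> b"
  shows "row_of b 1 = 0" "row_of b 2 = 0" "row_of b (b + 1) = 1" "row_of b (2 * b + 1) = 2"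
    "row_of b (2 * b + 2) = 2"
    "diag_of b 1 = 0" "diag_of b 2 = 1" "diag_of b (b + 1) = 1" "diag_of b (2 * b + 1) = 2"
proof -
  have "(2 * b + 1) div b = 2" by (rule div_nat_eqI) (use assms in simp_all)
  moreover have "(2 * b + 1) mod b = 1" using assms mod_mult_self3[of 2 b 1] by simp
  ultimately show "row_of b 1 = 0" "row_of b 2 = 0" "row_of b (b + 1) = 1"
    "row_of b (2 * b + 1) = 2" "row_of b (2 * b + 2) = 2"
    "diag_of b 1 = 0" "diag_of b 2 = 1" "diag_of b (b + 1) = 1" "diag_of b (2 * b + 1) = 2"
    using assms by (simp_all add: row_of_def diag_of_def)
qed

lemma row_of_less: "x \<in> {1..(b + 2) * b} \<Longrightarrow> row_of b x < b + 2"
  unfolding row_of_def by (intro less_mult_imp_div_less) auto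

lemma diag_of_less: "diag_of b x < b + 2"
  by (simp add: diag_of_def)

lemma row_fibre_eq:
  assumes "0 < b" "i < b + 2"
  shows "{x\<in>{1..(b + 2) * b}. row_of b x = i} = (\<lambda>k. i * b + k + 1) ` {..<b}"
proof (intro set_eqI iffI)
  fix x assume x: "x \<in> {x\<in>{1..(b + 2) * b}. row_of b x = i}"
  then obtain i' k where "k < b" "x = i' * b + k + 1"
    using point_codeE[OF assms(1)] by blast
  moreover have "i' = i" using x row_of_code[OF \<open>k < b\<close>, of i'] calculation(2) by simp
  ultimately show "x \<in> (\<lambda>k. i * b + k + 1) ` {..<b}" by blast
next
  fix x assume "x \<in> (\<lambda>k. i * b + k + 1) ` {..<b}"
  then obtain k where "k < b" "x = i * b + k + 1" by blast
  then show "x \<in> {x\<in>{1..(b + 2) * b}. row_of b x = i}"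
    using point_code_mem[OF assms(2)] row_of_code by simp
qed

lemma card_row_fibre:
  assumes "0 < b" "i < b + 2"
  shows "card {x\<in>{1..(b + 2) * b}. row_of b x = i} = b"
  unfolding row_fibre_eq[OF assms] by (subst card_image) (auto simp: inj_on_def)

lemma diag_of_eq_iff:
  assumes "i < b + 2" "k < b" "j < b + 2"
  shows "diag_of b (i * b + k + 1) = j \<longleftrightarrow> i = (if k \<le> j then j - k else j + (b + 2) - k)"
  unfolding diag_of_code[OF assms(1,2)] using assms by auto

lemma diag_fibre_eq:
  assumes "0 < b" "j < b + 2"
  shows "{x\<in>{1..(b + 2) * b}. diag_of b x = j}
    = (\<lambda>k. (if k \<le> j then j - k else j + (b + 2) - k) * b + k + 1) ` {..<b}"
proof (intro set_eqI iffI)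
  fix x assume x: "x \<in> {x\<in>{1..(b + 2) * b}. diag_of b x = j}"
  then obtain i k where ik: "i < b + 2" "k < b" "x = i * b + k + 1"
    using point_codeE[OF assms(1)] by blast
  then have "i = (if k \<le> j then j - k else j + (b + 2) - k)"
    using x diag_of_eq_iff[OF ik(1,2) assms(2)] by simp
  then show "x \<in> (\<lambda>k. (if k \<le> j then j - k else j + (b + 2) - k) * b + k + 1) ` {..<b}"
    using ik by blast
next
  fix x assume "x \<in> (\<lambda>k. (if k \<le> j then j - k else j + (b + 2) - k) * b + k + 1) ` {..<b}"
  then obtain k where k: "k < b" and x: "x = (if k \<le> j then j - k else j + (b + 2) - k) * b + k + 1"
    by blast
  have i: "(if k \<le> j then j - k else j + (b + 2) - k) < b + 2" using assms(2) k by auto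
  show "x \<in> {x\<in>{1..(b + 2) * b}. diag_of b x = j}"
    using point_code_mem[OF i k] diag_of_eq_iff[OF i k assms(2)] x by simp
qed

lemma card_diag_fibre:
  assumes "0 < b" "j < b + 2"
  shows "card {x\<in>{1..(b + 2) * b}. diag_of b x = j} = b"
proof -
  define h where "h = (\<lambda>k. (if k \<le> j then j - k else j + (b + 2) - k) * b + k + 1)"
  have h_mod: "(h k - 1) mod b = k" if "k < b" for k
    using that by (simp add: h_def)
  have "inj_on h {..<b}"
  proof (rule inj_onI)
    fix k k' assume "k \<in> {..<b}" "k' \<in> {..<b}" "h k = h k'"
    then show "k = k'" using h_mod[of k] h_mod[of k'] by simp
  qed
  then show ?thesis unfolding diag_fibre_eq[OF assms] h_def[symmetric] by (simp add: card_image)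
qed

lemma card_fibre_comp_permutes:
  assumes \<pi>: "\<pi> permutes S"
  shows "card {x\<in>S. L (\<pi> x) = t} = card {y\<in>S. L y = t}"
proof -
  have "{y\<in>S. L y = t} \<subseteq> \<pi> ` {x\<in>S. L (\<pi> x) = t}"
  proof
    fix y assume y: "y \<in> {y\<in>S. L y = t}"
    have "\<pi> (inv \<pi> y) = y" using permutes_inverses(1)[OF \<pi>] .
    moreover have "inv \<pi> y \<in> S" using y permutes_in_image[OF permutes_inv[OF \<pi>]] by simp
    ultimately show "y \<in> \<pi> ` {x\<in>S. L (\<pi> x) = t}" using y by (intro image_eqI[of y \<pi> "inv \<pi> y"]) auto
  qed
  moreover have "\<pi> ` {x\<in>S. L (\<pi> x) = t} \<subseteq> {y\<in>S. L y = t}"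
    using permutes_in_image[OF \<pi>] by auto
  ultimately have "\<pi> ` {x\<in>S. L (\<pi> x) = t} = {y\<in>S. L y = t}" by (rule subset_antisym[rotated])
  moreover have "inj_on \<pi> {x\<in>S. L (\<pi> x) = t}"
    using permutes_inj[OF \<pi>] by (rule inj_on_subset) simp
  ultimately show ?thesis using card_image by fastforce
qed

lemma special_points_mem:
  fixes b :: nat
  assumes "2 \<le> b"
  shows "1 \<in> {1..(b + 2) * b}" "2 \<in> {1..(b + 2) * b}" "b + 1 \<in> {1..(b + 2) * b}"
    "2 * b + 1 \<in> {1..(b + 2) * b}" "2 * b + 2 \<in> {1..(b + 2) * b}"
  using point_code_mem[of 0 b 0] point_code_mem[of 0 b 1] point_code_mem[of 1 b 0]
    point_code_mem[of 2 b 0] point_code_mem[of 2 b 1] assms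
  by (simp_all add: algebra_simps)

lemma twist_permutes:
  assumes "2 \<le> b"
  shows "twist b permutes {1..(b + 2) * b}"
  unfolding twist_def using special_points_mem[OF assms]
  by (intro permutes_compose permutes_swap_id) simp_all

lemma block_partition_rows:
  "0 < b \<Longrightarrow> block_partition ((b + 2) * b) (b + 2) b (fibres ((b + 2) * b) (b + 2) (row_of b))"
  using row_of_less card_row_fibre by (intro block_partition_fibres) blast+

lemma block_partition_diags:
  "0 < b \<Longrightarrow> block_partition ((b + 2) * b) (b + 2) b (fibres ((b + 2) * b) (b + 2) (diag_of b))"
  using diag_of_less card_diag_fibre by (intro block_partition_fibres) blast+

lemma block_partition_twisted_rows:
  assumes "2 \<le> b"
  shows "block_partition ((b + 2) * b) (b + 2) b (fibres ((b + 2) * b) (b + 2) (twisted_row_of b))"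
proof (intro block_partition_fibres ballI allI impI)
  note \<pi> = twist_permutes[OF assms]
  show "0 < b" using assms by simp
  show "twisted_row_of b x < b + 2" if "x \<in> {1..(b + 2) * b}" for x
    using row_of_less permutes_in_image[OF \<pi>] that by (simp add: twisted_row_of_def)
  show "card {x\<in>{1..(b + 2) * b}. twisted_row_of b x = t} = b" if "t < b + 2" for t
    unfolding twisted_row_of_def card_fibre_comp_permutes[OF \<pi>] using card_row_fibre assms that
    by simp
qed

lemma fibres_eqD:
  assumes "fibres n a L = fibres n a L'" "x \<in> {1..n}" "y \<in> {1..n}" "L x < a" "L x = L y"
  shows "L' x = L' y"
proof -
  have "{z\<in>{1..n}. L z = L x} \<in> fibres n a L'"
    using assms(1,4) unfolding fibres_def by blast
  then obtain j where j: "{z\<in>{1..n}. L z = L x} = {z\<in>{1..n}. L' z = j}" unfolding fibres_def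
    by blast
  have "x \<in> {z\<in>{1..n}. L z = L x}" "y \<in> {z\<in>{1..n}. L z = L x}" using assms(2,3,5) by simp_all
  then show ?thesis unfolding j by simp
qed

text \<open>Row i and diagonal j are disjoint iff i - j is 1 or 2 modulo a.\<close>
definition row_misses_diag :: "nat \<Rightarrow> nat \<Rightarrow> nat \<Rightarrow> bool" where
  "row_misses_diag a i j \<longleftrightarrow> i = j + 1 \<or> i = j + 2 \<or> i + a = j + 1 \<or> i + a = j + 2"

lemma ex_diag_shift_iff:
  fixes b i j :: nat
  assumes "i < b + 2" "j < b + 2"
  shows "(\<exists>k<b. (if i + k < b + 2 then i + k else i + k - (b + 2)) = j)
    \<longleftrightarrow> \<not> row_misses_diag (b + 2) i j"
proof
  assume "\<exists>k<b. (if i + k < b + 2 then i + k else i + k - (b + 2)) = j"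
  then show "\<not> row_misses_diag (b + 2) i j" using assms
    by (auto simp: row_misses_diag_def split: if_splits)
next
  assume "\<not> row_misses_diag (b + 2) i j"
  define k where "k = (if i \<le> j then j - i else j + (b + 2) - i)"
  have "k < b" using \<open>\<not> row_misses_diag (b + 2) i j\<close> assms by (auto simp: k_def row_misses_diag_def)
  moreover have "(if i + k < b + 2 then i + k else i + k - (b + 2)) = j" using assms by (auto simp: k_def)
  ultimately show "\<exists>k<b. (if i + k < b + 2 then i + k else i + k - (b + 2)) = j" by blast
qed

lemma row_meets_diag_iff:
  assumes "0 < b" "i < b + 2" "j < b + 2"
  shows "(\<exists>x\<in>{1..(b + 2) * b}. row_of b x = i \<and> diag_of b x = j) \<longleftrightarrow> \<not> row_misses_diag (b + 2) i j"
proof -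
  have "(\<exists>x\<in>{1..(b + 2) * b}. row_of b x = i \<and> diag_of b x = j)
      \<longleftrightarrow> (\<exists>k<b. diag_of b (i * b + k + 1) = j)"
  proof
    assume "\<exists>x\<in>{1..(b + 2) * b}. row_of b x = i \<and> diag_of b x = j"
    then obtain x where x: "x \<in> {1..(b + 2) * b}" "row_of b x = i" "diag_of b x = j" by blast
    obtain i' k where "k < b" "x = i' * b + k + 1" using point_codeE[OF assms(1) x(1)] by blast
    moreover have "i' = i" using x(2) row_of_code[OF \<open>k < b\<close>, of i'] calculation(2) by simp
    ultimately show "\<exists>k<b. diag_of b (i * b + k + 1) = j" using x(3) by blast
  next
    assume "\<exists>k<b. diag_of b (i * b + k + 1) = j"
    then obtain k where "k < b" "diag_of b (i * b + k + 1) = j" by blast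
    then show "\<exists>x\<in>{1..(b + 2) * b}. row_of b x = i \<and> diag_of b x = j"
      using point_code_mem[OF assms(2) \<open>k < b\<close>] row_of_code[OF \<open>k < b\<close>, of i] by blast
  qed
  also have "\<dots> \<longleftrightarrow> \<not> row_misses_diag (b + 2) i j"
    using ex_diag_shift_iff[OF assms(2,3)] diag_of_code[OF assms(2)] by auto
  finally show ?thesis .
qed

lemma row_diag_cell_unique:
  assumes "0 < b" "x \<in> {1..(b + 2) * b}" "y \<in> {1..(b + 2) * b}"
    and "row_of b x = row_of b y" "diag_of b x = diag_of b y"
  shows "x = y"
proof -
  obtain i k where ik: "i < b + 2" "k < b" "x = i * b + k + 1" using point_codeE[OF assms(1,2)]
    by blast
  obtain i' k' where ik': "i' < b + 2" "k' < b" "y = i' * b + k' + 1"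
    using point_codeE[OF assms(1,3)] by blast
  have "i' = i"
    using assms(4) row_of_code[OF ik(2), of i] row_of_code[OF ik'(2), of i'] ik(3) ik'(3) by simp
  then have "k = k'"
    using assms(5) diag_of_code[OF ik(1,2)] diag_of_code[OF ik'(1,2)] ik(2,3) ik'(2,3) ik(1)
    by (auto split: if_splits)
  then show ?thesis using ik(3) ik'(3) \<open>i' = i\<close> by simp
qed

text \<open>Row i + 1 misses exactly the diagonals i and i - 1; propagating this along the rows
  forces a pair of index permutations preserving the misses relation and fixing 0 to be trivial.\<close>
lemma row_misses_diag_rigid_rows:
  assumes a: "4 \<le> a"
    and \<sigma>: "\<And>i. i < a \<Longrightarrow> \<sigma> i < a" "inj_on \<sigma> {..<a}" and \<tau>: "\<And>j. j < a \<Longrightarrow> \<tau> j < a"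
    and pres: "\<And>i j. i < a \<Longrightarrow> j < a \<Longrightarrow> row_misses_diag a (\<sigma> i) (\<tau> j) \<longleftrightarrow> row_misses_diag a i j"
    and \<sigma>0: "\<sigma> 0 = 0" and \<tau>0: "\<tau> 0 = 0" and i: "i < a"
  shows "\<sigma> i = i"
proof -
  have \<sigma>1: "\<sigma> 1 = 1"
  proof -
    have "row_misses_diag a (\<sigma> 1) 0" using pres[of 1 0] a \<tau>0 by (simp add: row_misses_diag_def)
    moreover have "row_misses_diag a 0 (\<tau> (a - 1))" "row_misses_diag a (\<sigma> 1) (\<tau> (a - 1))"
      using pres[of 0 "a - 1"] pres[of 1 "a - 1"] a \<sigma>0 by (auto simp: row_misses_diag_def)
    ultimately show ?thesis using \<sigma>(1)[of 1] \<tau>[of "a - 1"] a by (auto simp: row_misses_diag_def)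
  qed
  have step: "\<sigma> (i + 1) = i + 1"
    if i: "1 \<le> i" "i + 1 < a" and IH: "\<sigma> (i - 1) = i - 1" "\<sigma> i = i" for i
  proof -
    have "row_misses_diag a i (\<tau> (i - 1))" "\<not> row_misses_diag a (i - 1) (\<tau> (i - 1))"
      using pres[of i "i - 1"] pres[of "i - 1" "i - 1"] i IH a by (auto simp: row_misses_diag_def)
    moreover have "\<tau> (i - 1) < a" using \<tau>[of "i - 1"] i by simp
    ultimately have "\<tau> (i - 1) = i - 1" using i by (auto simp: row_misses_diag_def)
    then have "row_misses_diag a (\<sigma> (i + 1)) (i - 1)"
      using pres[of "i + 1" "i - 1"] i by (auto simp: row_misses_diag_def)
    moreover have "\<sigma> (i + 1) \<noteq> i" using inj_onD[OF \<sigma>(2), of "i + 1" i] i IH(2) by auto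
    ultimately show ?thesis using \<sigma>(1)[of "i + 1"] i by (auto simp: row_misses_diag_def)
  qed
  have pairs: "\<sigma> i = i \<and> \<sigma> (i + 1) = i + 1" if "i + 1 < a" for i
    using that
  proof (induction i)
    case 0
    then show ?case using \<sigma>0 \<sigma>1 by simp
  next
    case (Suc i)
    then show ?case using step[of "Suc i"] by simp
  qed
  show ?thesis
  proof (cases "i + 1 < a")
    case False
    then show ?thesis using pairs[of "i - 1"] i a by simp
  qed (use pairs in blast)
qed

lemma row_misses_diag_rigid_diags:
  assumes a: "4 \<le> a" and \<sigma>: "\<And>i. i < a \<Longrightarrow> \<sigma> i = i" and \<tau>: "\<And>j. j < a \<Longrightarrow> \<tau> j < a"
    and pres: "\<And>i j. i < a \<Longrightarrow> j < a \<Longrightarrow> row_misses_diag a (\<sigma> i) (\<tau> j) \<longleftrightarrow> row_misses_diag a i j"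
    and j: "j < a"
  shows "\<tau> j = j"
proof -
  define i1 where "i1 = (if j + 1 < a then j + 1 else j + 1 - a)"
  define i2 where "i2 = (if j + 2 < a then j + 2 else j + 2 - a)"
  have i: "i1 < a" "i2 < a" "row_misses_diag a i1 j" "row_misses_diag a i2 j"
    using j a by (auto simp: i1_def i2_def row_misses_diag_def)
  then have "row_misses_diag a i1 (\<tau> j)" "row_misses_diag a i2 (\<tau> j)"
    using pres[OF _ j] \<sigma> by auto
  then show ?thesis using \<tau>[OF j] j a
    by (auto simp: i1_def i2_def row_misses_diag_def split: if_splits)
qed

lemma preserves_fibres_induced_map:
  assumes s: "s permutes S" and pres: "preserves_fibres s S L"
  obtains \<sigma> where "\<And>x. x \<in> S \<Longrightarrow> L (s x) = \<sigma> (L x)" "inj_on \<sigma> (L ` S)" "\<sigma> ` L ` S \<subseteq> L ` S"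
proof -
  define \<sigma> where "\<sigma> i = L (s (SOME x. x \<in> S \<and> L x = i))" for i
  have lift: "L (s x) = \<sigma> (L x)" if x: "x \<in> S" for x
  proof -
    define r where "r = (SOME y. y \<in> S \<and> L y = L x)"
    have "\<exists>y. y \<in> S \<and> L y = L x" using x by blast
    then have r: "r \<in> S" "L r = L x" unfolding r_def by (metis (mono_tags, lifting) someI_ex)+
    then have "L (s x) = L (s r)" using preserves_fibresD[OF pres x] by simp
    then show ?thesis by (simp add: \<sigma>_def r_def)
  qed
  have "inj_on \<sigma> (L ` S)"
  proof (rule inj_onI)
    fix i j assume "i \<in> L ` S" "j \<in> L ` S" "\<sigma> i = \<sigma> j"
    then obtain x y where "x \<in> S" "y \<in> S" "i = L x" "j = L y" "L (s x) = L (s y)" using lift by auto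
    then show "i = j" using preserves_fibresD[OF pres] by blast
  qed
  moreover have "\<sigma> ` L ` S \<subseteq> L ` S"
  proof
    fix i assume "i \<in> \<sigma> ` L ` S"
    then obtain x where "x \<in> S" "i = L (s x)" using lift by auto
    then show "i \<in> L ` S" using permutes_in_image[OF s] by blast
  qed
  ultimately show ?thesis using that lift by blast
qed

lemma row_of_image: "0 < b \<Longrightarrow> row_of b ` {1..(b + 2) * b} = {..<b + 2}"
proof (intro subset_antisym subsetI)
  fix i assume "0 < b" "i \<in> {..<b + 2}"
  then have "i * b + 0 + 1 \<in> {1..(b + 2) * b}" "row_of b (i * b + 0 + 1) = i"
    using point_code_mem[of i b 0] row_of_code[of 0 b i] by simp_all
  then show "i \<in> row_of b ` {1..(b + 2) * b}" by (metis image_eqI)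
qed (use row_of_less in blast)

lemma diag_of_image: "0 < b \<Longrightarrow> diag_of b ` {1..(b + 2) * b} = {..<b + 2}"
proof (intro subset_antisym subsetI)
  fix j assume "0 < b" "j \<in> {..<b + 2}"
  then have "j * b + 0 + 1 \<in> {1..(b + 2) * b}" "diag_of b (j * b + 0 + 1) = j"
    using point_code_mem[of j b 0] diag_of_code[of j b 0] by simp_all
  then show "j \<in> diag_of b ` {1..(b + 2) * b}" by (metis image_eqI)
qed (use diag_of_less in blast)

lemma induced_maps_preserve_row_misses_diag:
  assumes b: "0 < b" and s: "s permutes {1..(b + 2) * b}"
    and \<sigma>: "\<And>x. x \<in> {1..(b + 2) * b} \<Longrightarrow> row_of b (s x) = \<sigma> (row_of b x)" "inj_on \<sigma> {..<b + 2}"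
    and \<tau>: "\<And>x. x \<in> {1..(b + 2) * b} \<Longrightarrow> diag_of b (s x) = \<tau> (diag_of b x)" "inj_on \<tau> {..<b + 2}"
    and ij: "i < b + 2" "j < b + 2" "\<sigma> i < b + 2" "\<tau> j < b + 2"
  shows "row_misses_diag (b + 2) (\<sigma> i) (\<tau> j) \<longleftrightarrow> row_misses_diag (b + 2) i j"
proof -
  let ?S = "{1..(b + 2) * b}"
  have "(\<exists>y\<in>?S. row_of b y = \<sigma> i \<and> diag_of b y = \<tau> j) \<longleftrightarrow> (\<exists>x\<in>?S. row_of b x = i \<and> diag_of b x = j)"
  proof
    assume "\<exists>y\<in>?S. row_of b y = \<sigma> i \<and> diag_of b y = \<tau> j"
    then obtain y where y: "y \<in> ?S" "row_of b y = \<sigma> i" "diag_of b y = \<tau> j" by blast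
    define x where "x = inv s y"
    have x: "x \<in> ?S" "s x = y"
      using y(1) permutes_in_image[OF permutes_inv[OF s]] permutes_inverses(1)[OF s]
      by (simp_all add: x_def)
    have "\<sigma> (row_of b x) = \<sigma> i" "\<tau> (diag_of b x) = \<tau> j" using \<sigma>(1) \<tau>(1) x y by metis+
    then have "row_of b x = i" "diag_of b x = j"
      using inj_onD[OF \<sigma>(2), of "row_of b x" i] inj_onD[OF \<tau>(2), of "diag_of b x" j]
        row_of_less[OF x(1)] diag_of_less[of b x] ij(1,2) by simp_all
    then show "\<exists>x\<in>?S. row_of b x = i \<and> diag_of b x = j" using x(1) by blast
  next
    assume "\<exists>x\<in>?S. row_of b x = i \<and> diag_of b x = j"
    then obtain x where "x \<in> ?S" "row_of b x = i" "diag_of b x = j" by blast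
    then show "\<exists>y\<in>?S. row_of b y = \<sigma> i \<and> diag_of b y = \<tau> j"
      using \<sigma>(1) \<tau>(1) permutes_in_image[OF s] by blast
  qed
  then show ?thesis using row_meets_diag_iff[OF b] ij by blast
qed

lemma preserves_rows_diags_fixing_1_eq_id:
  assumes b: "2 \<le> b" and s: "s permutes {1..(b + 2) * b}"
    and rows: "preserves_fibres s {1..(b + 2) * b} (row_of b)"
    and diags: "preserves_fibres s {1..(b + 2) * b} (diag_of b)" and s1: "s 1 = 1"
  shows "s = id"
proof -
  let ?S = "{1..(b + 2) * b}"
  have b0: "0 < b" using b by simp
  obtain \<sigma> where \<sigma>: "\<And>x. x \<in> ?S \<Longrightarrow> row_of b (s x) = \<sigma> (row_of b x)"
    and \<sigma>_inj: "inj_on \<sigma> (row_of b ` ?S)" and \<sigma>_img: "\<sigma> ` row_of b ` ?S \<subseteq> row_of b ` ?S"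
    using preserves_fibres_induced_map[OF s rows] by blast
  obtain \<tau> where \<tau>: "\<And>x. x \<in> ?S \<Longrightarrow> diag_of b (s x) = \<tau> (diag_of b x)"
    and \<tau>_inj: "inj_on \<tau> (diag_of b ` ?S)" and \<tau>_img: "\<tau> ` diag_of b ` ?S \<subseteq> diag_of b ` ?S"
    using preserves_fibres_induced_map[OF s diags] by blast
  have inj: "inj_on \<sigma> {..<b + 2}" "inj_on \<tau> {..<b + 2}"
    and less: "\<And>i. i < b + 2 \<Longrightarrow> \<sigma> i < b + 2" "\<And>j. j < b + 2 \<Longrightarrow> \<tau> j < b + 2"
    using \<sigma>_inj \<sigma>_img \<tau>_inj \<tau>_img unfolding row_of_image[OF b0] diag_of_image[OF b0] by auto
  have pres: "row_misses_diag (b + 2) (\<sigma> i) (\<tau> j) \<longleftrightarrow> row_misses_diag (b + 2) i j"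
    if "i < b + 2" "j < b + 2" for i j
    using induced_maps_preserve_row_misses_diag[OF b0 s \<sigma> inj(1) \<tau> inj(2) that
        less(1)[OF that(1)] less(2)[OF that(2)]] .
  have zero: "\<sigma> 0 = 0" "\<tau> 0 = 0"
    using \<sigma>(1) \<tau>(1) special_points_mem(1)[OF b] row_diag_of_special[OF b] s1 by metis+
  have \<sigma>_id: "\<sigma> i = i" if "i < b + 2" for i
    by (rule row_misses_diag_rigid_rows[of "b + 2" \<sigma> \<tau>, OF _ less(1) inj(1) less(2) pres zero that])
      (use b in simp)
  have \<tau>_id: "\<tau> j = j" if "j < b + 2" for j
    by (rule row_misses_diag_rigid_diags[of "b + 2" \<sigma> \<tau>, OF _ \<sigma>_id less(2) pres that])
      (use b in simp)
  show "s = id"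
  proof
    fix x show "s x = id x"
    proof (cases "x \<in> ?S")
      case True
      then show ?thesis
        using row_diag_cell_unique[OF b0 permutes_in_image[OF s, THEN iffD2, OF True] True]
          \<sigma>[OF True] \<tau>[OF True] \<sigma>_id[OF row_of_less[OF True]] \<tau>_id[OF diag_of_less] by simp
    qed (simp add: permutes_not_in[OF s])
  qed
qed

definition common_fibre :: "'a set \<Rightarrow> ('a \<Rightarrow> 'b) \<Rightarrow> ('a \<Rightarrow> 'c) \<Rightarrow> 'a \<Rightarrow> 'a set" where
  "common_fibre S L L' x = {y\<in>S. L y = L x \<and> L' y = L' x}"

lemma image_common_fibre:
  assumes s: "s permutes S" and L: "preserves_fibres s S L" and L': "preserves_fibres s S L'"
    and x: "x \<in> S"
  shows "s ` common_fibre S L L' x = common_fibre S L L' (s x)"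
proof (rule subset_antisym)
  show "common_fibre S L L' (s x) \<subseteq> s ` common_fibre S L L' x"
  proof
    fix y assume y: "y \<in> common_fibre S L L' (s x)"
    have y': "inv s y \<in> S" "s (inv s y) = y"
      using y permutes_in_image[OF permutes_inv[OF s]] permutes_inverses(1)[OF s]
      by (simp_all add: common_fibre_def)
    have "L (s (inv s y)) = L (s x)" "L' (s (inv s y)) = L' (s x)"
      using y y'(2) by (simp_all add: common_fibre_def)
    then have "inv s y \<in> common_fibre S L L' x"
      using preserves_fibresD[OF L y'(1) x] preserves_fibresD[OF L' y'(1) x] y'(1)
      by (simp add: common_fibre_def)
    then show "y \<in> s ` common_fibre S L L' x" using y'(2) by (metis image_eqI)
  qed
  show "s ` common_fibre S L L' x \<subseteq> common_fibre S L L' (s x)"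
  proof
    fix y assume "y \<in> s ` common_fibre S L L' x"
    then obtain z where z: "z \<in> S" "L z = L x" "L' z = L' x" "y = s z"
      by (auto simp: common_fibre_def)
    then show "y \<in> common_fibre S L L' (s x)"
      using preserves_fibresD[OF L z(1) x] preserves_fibresD[OF L' z(1) x] permutes_in_image[OF s]
      by (simp add: common_fibre_def)
  qed
qed

lemma card_common_fibre_image:
  assumes s: "s permutes S" and L: "preserves_fibres s S L" and L': "preserves_fibres s S L'"
    and x: "x \<in> S"
  shows "card (common_fibre S L L' (s x)) = card (common_fibre S L L' x)"
proof -
  have "inj_on s (common_fibre S L L' x)"
    using permutes_inj[OF s] by (rule inj_on_subset) simp
  then show ?thesis using image_common_fibre[OF assms] card_image by fastforce
qed

lemma twisted_row_of_special:
  assumes "2 \<le> b"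
  shows "twisted_row_of b 1 = 2" "twisted_row_of b (b + 1) = 0" "twisted_row_of b (2 * b + 2) = 1"
  using assms row_diag_of_special[OF assms]
  by (simp_all add: twisted_row_of_def twist_def transpose_def)

lemma twisted_row_of_other:
  "x \<noteq> 1 \<Longrightarrow> x \<noteq> b + 1 \<Longrightarrow> x \<noteq> 2 * b + 2 \<Longrightarrow> twisted_row_of b x = row_of b x"
  by (simp add: twisted_row_of_def twist_def transpose_def)

lemma two_le_card_common_fibre:
  assumes "finite S" "y \<in> S" "z \<in> S" "y \<noteq> z" "L y = L z" "L' y = L' z"
  shows "2 \<le> card (common_fibre S L L' z)"
proof -
  have "{y, z} \<subseteq> common_fibre S L L' z" using assms(2,3,5,6) by (simp add: common_fibre_def)
  then have "card {y, z} \<le> card (common_fibre S L L' z)"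
    using assms(1) by (intro card_mono) (simp_all add: common_fibre_def)
  then show ?thesis using assms(4) by simp
qed

lemma two_le_card_common_fibre_row_twisted:
  fixes b z :: nat
  assumes b: "3 \<le> b" and z: "z \<in> {1..(b + 2) * b}" "z \<notin> {1, b + 1, 2 * b + 2}"
  shows "2 \<le> card (common_fibre {1..(b + 2) * b} (row_of b) (twisted_row_of b) z)"
proof -
  let ?S = "{1..(b + 2) * b}" and ?M = "{1, b + 1, 2 * b + 2}"
  define R where "R = {x\<in>?S. row_of b x = row_of b z}"
  have "card R = b" unfolding R_def using card_row_fibre row_of_less[OF z(1)] b by simp
  moreover have "card (R \<inter> ?M) \<le> 1"
  proof -
    have "row_of b 1 = 0" "row_of b (b + 1) = 1" "row_of b (2 * b + 2) = 2"
      using row_diag_of_special b by simp_all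
    then have "inj_on (row_of b) ?M" by (simp add: inj_on_def)
    moreover have "row_of b x = row_of b y" if "x \<in> R" "y \<in> R" for x y
      using that by (simp add: R_def)
    ultimately have "\<forall>x\<in>R \<inter> ?M. \<forall>y\<in>R \<inter> ?M. x = y" by (meson IntD1 IntD2 inj_onD)
    moreover have "finite (R \<inter> ?M)" by simp
    ultimately have "card (R \<inter> ?M) \<le> Suc 0" using card_le_Suc0_iff_eq by blast
    then show ?thesis by simp
  qed
  ultimately have "2 \<le> card (R - ?M)" using card_Diff_subset_Int[of R ?M] b by simp
  moreover have "R - ?M \<subseteq> common_fibre ?S (row_of b) (twisted_row_of b) z"
    using z(2) twisted_row_of_other by (auto simp: R_def common_fibre_def)
  ultimately show ?thesis
    using card_mono[of "common_fibre ?S (row_of b) (twisted_row_of b) z" "R - ?M"]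
    by (simp add: common_fibre_def)
qed

lemma common_fibre_row_twisted_1:
  assumes b: "2 \<le> b"
  shows "common_fibre {1..(b + 2) * b} (row_of b) (twisted_row_of b) 1 = {1}"
proof -
  have "y = 1" if y: "y \<in> {1..(b + 2) * b}" "row_of b y = 0" "twisted_row_of b y = 2" for y
  proof (rule ccontr)
    assume "y \<noteq> 1"
    moreover have "y \<noteq> b + 1" "y \<noteq> 2 * b + 2" using y(2) row_diag_of_special[OF b] by auto
    ultimately have "twisted_row_of b y = row_of b y" by (rule twisted_row_of_other)
    then show False using y(2,3) by simp
  qed
  moreover note row_diag_of_special[OF b]
  ultimately show ?thesis
    using twisted_row_of_special(1)[OF b] special_points_mem(1)[OF b]
    by (auto simp: common_fibre_def)
qed

lemma common_fibre_diag_twisted_1: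
  assumes b: "2 \<le> b"
  shows "common_fibre {1..(b + 2) * b} (diag_of b) (twisted_row_of b) 1 = {1}"
proof -
  have "y = 1" if y: "y \<in> {1..(b + 2) * b}" "diag_of b y = 0" "twisted_row_of b y = 2" for y
  proof (rule ccontr)
    assume "y \<noteq> 1"
    moreover have "y \<noteq> b + 1" "y \<noteq> 2 * b + 2" using twisted_row_of_special[OF b] y(3) by auto
    ultimately have "row_of b y = 2" using y(3) twisted_row_of_other by simp
    moreover obtain i k where "k < b" "y = i * b + k + 1" using point_codeE y(1) b
      by (metis not_numeral_le_zero not_gr0)
    ultimately have "y = 2 * b + k + 1" "k < b" using row_of_code by auto
    then have "diag_of b y = 2 + k" using diag_of_code[of 2 b k] by simp
    then show False using y(2) by simp
  qed
  moreover note row_diag_of_special[OF b]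
  ultimately show ?thesis
    using twisted_row_of_special(1)[OF b] special_points_mem(1)[OF b]
    by (auto simp: common_fibre_def)
qed

text \<open>For b \<ge> 3 the point 1 is the only point whose two cells with the twisted rows, one in
  its row and one in its diagonal, are both singletons; a permutation preserving the three
  partitions preserves the sizes of these cells.\<close>
lemma preserves_rows_diags_twisted_fixes_1_large:
  fixes b :: nat
  assumes b: "3 \<le> b" and s: "s permutes {1..(b + 2) * b}"
    and rows: "preserves_fibres s {1..(b + 2) * b} (row_of b)"
    and diags: "preserves_fibres s {1..(b + 2) * b} (diag_of b)"
    and twisted: "preserves_fibres s {1..(b + 2) * b} (twisted_row_of b)"
  shows "s 1 = 1"
proof (rule ccontr)
  let ?S = "{1..(b + 2) * b}"
  assume ne: "s 1 \<noteq> 1"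
  have b2: "2 \<le> b" using b by simp
  have one: "1 \<in> ?S" using special_points_mem(1)[OF b2] .
  then have z: "s 1 \<in> ?S" using permutes_in_image[OF s] by simp
  have row_cell: "card (common_fibre ?S (row_of b) (twisted_row_of b) (s 1)) = 1"
    using card_common_fibre_image[OF s rows twisted one] common_fibre_row_twisted_1[OF b2] by simp
  have diag_cell: "card (common_fibre ?S (diag_of b) (twisted_row_of b) (s 1)) = 1"
    using card_common_fibre_image[OF s diags twisted one] common_fibre_diag_twisted_1[OF b2] by simp
  consider "s 1 = b + 1" | "s 1 = 2 * b + 2" | "s 1 \<notin> {1, b + 1, 2 * b + 2}" using ne by blast
  then show False
  proof cases
    case 1
    have "twisted_row_of b 2 = 0" using row_diag_of_special[OF b2] b twisted_row_of_other[of 2 b]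
      by simp
    then have "2 \<le> card (common_fibre ?S (diag_of b) (twisted_row_of b) (s 1))"
      using two_le_card_common_fibre[of ?S 2 "s 1" "diag_of b" "twisted_row_of b"]
        special_points_mem(2)[OF b2] z 1 b
        row_diag_of_special[OF b2] twisted_row_of_special[OF b2] by simp
    then show False using diag_cell by simp
  next
    case 2
    have "diag_of b (1 * b + 2 + 1) = 3" "diag_of b (2 * b + 1 + 1) = 3"
      "row_of b (1 * b + 2 + 1) = 1"
      using diag_of_code[of 1 b 2] diag_of_code[of 2 b 1] row_of_code[of 2 b 1] b by simp_all
    moreover have "1 * b + 2 + 1 \<in> ?S" using point_code_mem[of 1 b 2] b by simp
    moreover have "twisted_row_of b (1 * b + 2 + 1) = row_of b (1 * b + 2 + 1)"
      using b by (intro twisted_row_of_other) simp_all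
    ultimately have "2 \<le> card (common_fibre ?S (diag_of b) (twisted_row_of b) (s 1))"
      using two_le_card_common_fibre[of ?S "1 * b + 2 + 1" "s 1" "diag_of b" "twisted_row_of b"]
        z 2 b twisted_row_of_special[OF b2]
      by simp
    then show False using diag_cell by simp
  next
    case 3
    then show False using two_le_card_common_fibre_row_twisted[OF b z] row_cell by simp
  qed
qed

lemma preserves_fibres_partner:
  assumes s: "s permutes S" and L: "preserves_fibres s S L"
    and partner: "\<forall>u\<in>S. \<forall>w\<in>S. L w = L u \<longrightarrow> w = u \<or> w = f u"
    and xy: "x \<in> S" "y \<in> S" "x \<noteq> y" "L x = L y"
  shows "s y = f (s x)"
proof -
  have "s x \<in> S" "s y \<in> S" using permutes_in_image[OF s] xy(1,2) by auto
  moreover have "L (s y) = L (s x)" using preserves_fibresD[OF L xy(1,2)] xy(4) by simp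
  moreover have "s y \<noteq> s x" using inj_onD[OF permutes_inj_on[OF s]] xy(3) by blast
  ultimately show ?thesis using partner by blast
qed

text \<open>For b = 2 the cell sizes do not single out 1. Instead, each of the three partitions into
  pairs is given by a fixed-point-free involution commuting with s; chasing 1 around two
  4-cycles of these involutions shows that s 1 is a common fixed point of two products of them,
  and 1 is the only such point.\<close>
lemma preserves_rows_diags_twisted_fixes_1_small:
  assumes s: "s permutes {1..(2 + 2) * 2}"
    and rows: "preserves_fibres s {1..(2 + 2) * 2} (row_of 2)"
    and diags: "preserves_fibres s {1..(2 + 2) * 2} (diag_of 2)"
    and twisted: "preserves_fibres s {1..(2 + 2) * 2} (twisted_row_of 2)"
  shows "s 1 = 1"
proof -
  let ?S = "{1..(2 + 2) * 2 :: nat}"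
  have S: "?S = {1, 2, 3, 4, 5, 6, 7, 8}" by auto
  define fP :: "nat \<Rightarrow> nat" where "fP u = (if odd u then u + 1 else u - 1)" for u
  define fQ :: "nat \<Rightarrow> nat"
    where "fQ u = (if u = 1 then 8 else if u = 8 then 1 else if even u then u + 1 else u - 1)" for u
  define fR :: "nat \<Rightarrow> nat"
    where "fR u = (if u = 1 then 5 else if u = 5 then 1 else if u = 2 then 3 else if u = 3 then 2
      else if u = 4 then 6 else if u = 6 then 4 else if u = 7 then 8 else 7)" for u
  have partner_P: "\<forall>u\<in>?S. \<forall>w\<in>?S. row_of 2 w = row_of 2 u \<longrightarrow> w = u \<or> w = fP u"
    unfolding S by (simp add: row_of_def fP_def)
  note P = preserves_fibres_partner[OF s rows partner_P]
  have partner_Q: "\<forall>u\<in>?S. \<forall>w\<in>?S. diag_of 2 w = diag_of 2 u \<longrightarrow> w = u \<or> w = fQ u"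
    unfolding S by (simp add: diag_of_def fQ_def)
  note Q = preserves_fibres_partner[OF s diags partner_Q]
  have partner_R: "\<forall>u\<in>?S. \<forall>w\<in>?S. twisted_row_of 2 w = twisted_row_of 2 u \<longrightarrow> w = u \<or> w = fR u"
    unfolding S by (simp add: twisted_row_of_def twist_def transpose_def row_of_def fR_def)
  note R = preserves_fibres_partner[OF s twisted partner_R]
  have "s 2 = fP (s 1)" using P[of 1 2] by (simp add: row_of_def)
  moreover have "s 3 = fQ (s 2)" using Q[of 2 3] by (simp add: diag_of_def)
  moreover have "s 2 = fR (s 3)" using R[of 3 2]
    by (simp add: twisted_row_of_def twist_def row_of_def)
  moreover have "s 1 = fP (s 2)" using P[of 2 1] by (simp add: row_of_def)
  ultimately have cycle1: "s 1 = fP (fR (fQ (fP (s 1))))" by (metis (no_types))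
  have "s 8 = fQ (s 1)" using Q[of 1 8] by (simp add: diag_of_def)
  moreover have "s 7 = fP (s 8)" using P[of 8 7] by (simp add: row_of_def)
  moreover have "s 8 = fR (s 7)" using R[of 7 8]
    by (simp add: twisted_row_of_def twist_def row_of_def)
  moreover have "s 1 = fQ (s 8)" using Q[of 8 1] by (simp add: diag_of_def)
  ultimately have cycle2: "s 1 = fQ (fR (fP (fQ (s 1))))" by (metis (no_types))
  have "s 1 \<in> ?S" using permutes_in_image[OF s, of 1] by simp
  then show ?thesis using cycle1 cycle2 unfolding S by (auto simp: fP_def fQ_def fR_def)
qed

lemma stabiliser_rows_diags_twisted_rows_trivial:
  fixes b :: nat
  assumes b: "2 \<le> b" and s: "s permutes {1..(b + 2) * b}"
    and "stabilises s (fibres ((b + 2) * b) (b + 2) (row_of b))"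
    and "stabilises s (fibres ((b + 2) * b) (b + 2) (diag_of b))"
    and "stabilises s (fibres ((b + 2) * b) (b + 2) (twisted_row_of b))"
  shows "s = id"
proof -
  let ?S = "{1..(b + 2) * b}"
  have rows: "preserves_fibres s ?S (row_of b)"
    using stabilises_fibres_imp_preserves_fibres[OF s assms(3)] row_of_less by blast
  have diags: "preserves_fibres s ?S (diag_of b)"
    using stabilises_fibres_imp_preserves_fibres[OF s assms(4)] diag_of_less by blast
  have twisted: "preserves_fibres s ?S (twisted_row_of b)"
    using stabilises_fibres_imp_preserves_fibres[OF s assms(5)] row_of_less
      permutes_in_image[OF twist_permutes[OF b]] by (simp add: twisted_row_of_def)
  have "s 1 = 1"
  proof (cases "b = 2")
    case True
    then show ?thesis
      using preserves_rows_diags_twisted_fixes_1_small s rows diags twisted by simp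
  next
    case False
    then show ?thesis
      using preserves_rows_diags_twisted_fixes_1_large[OF _ s rows diags twisted] b by simp
  qed
  then show ?thesis by (rule preserves_rows_diags_fixing_1_eq_id[OF b s rows diags])
qed

lemma rows_diags_twisted_rows_distinct:
  fixes b :: nat
  assumes b: "2 \<le> b"
  defines "n \<equiv> (b + 2) * b" and "a \<equiv> b + 2"
  shows "card {fibres n a (row_of b), fibres n a (diag_of b), fibres n a (twisted_row_of b)} = 3"
proof -
  note pts = special_points_mem[OF b, folded n_def] and val = row_diag_of_special[OF b]
  note tw = twisted_row_of_special[OF b]
    twisted_row_of_other[of 2 b] twisted_row_of_other[of "2 * b + 1" b]
  have "fibres n a (row_of b) \<noteq> fibres n a (diag_of b)"
    using fibres_eqD[of n a "row_of b" "diag_of b" 1 2] pts val b by (auto simp: a_def)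
  moreover have "fibres n a (row_of b) \<noteq> fibres n a (twisted_row_of b)"
    using fibres_eqD[of n a "row_of b" "twisted_row_of b" 1 2] pts val tw b by (auto simp: a_def)
  moreover have "fibres n a (twisted_row_of b) \<noteq> fibres n a (diag_of b)"
    using fibres_eqD[of n a "twisted_row_of b" "diag_of b" 1 "2 * b + 1"] pts val tw b
    by (auto simp: a_def)
  ultimately show ?thesis by auto
qed

section \<open>The base size\<close>

definition trivial_common_stabiliser :: "nat \<Rightarrow> nat set set set \<Rightarrow> bool" where
  "trivial_common_stabiliser n S \<longleftrightarrow> (\<forall>s. s permutes {1..n} \<and> (\<forall>P\<in>S. stabilises s P) \<longrightarrow> s = id)"

lemma base_size_eqI:
  assumes "finite S" "card S = k" "\<forall>P\<in>S. block_partition n a b P" "trivial_common_stabiliser n S"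
    and "\<And>S. finite S \<Longrightarrow> \<forall>P\<in>S. block_partition n a b P \<Longrightarrow> trivial_common_stabiliser n S \<Longrightarrow> k \<le> card S"
  shows "base_size n a b = k"
  unfolding base_size_def using assms
  by (intro Least_equality) (auto simp: trivial_common_stabiliser_def)

lemma card_le_2_subset_pair:
  assumes "finite S" "card S \<le> 2"
  obtains x y where "S \<subseteq> {x, y}"
proof -
  consider "card S = 0" | "card S = 1" | "card S = 2" using assms(2) by linarith
  then show ?thesis
  proof cases
    case 1 then show ?thesis using that assms(1) by simp
  next
    case 2 then show ?thesis using that by (metis card_1_singletonE insert_subset subset_insertI)
  next
    case 3 then show ?thesis using that by (metis card_2_iff subset_refl)
  qed
qed

lemma card_ge_3_if_trivial_common_stabiliser:
  assumes ab: "a = b + 2" and P0: "block_partition n a b P0"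
    and S: "finite S" "\<forall>P\<in>S. block_partition n a b P" "trivial_common_stabiliser n S"
  shows "3 \<le> card S"
proof (rule ccontr)
  assume "\<not> 3 \<le> card S"
  then have "card S \<le> 2" by simp
  then obtain x y where xy: "S \<subseteq> {x, y}" by (rule card_le_2_subset_pair[OF S(1)])
  define P where "P = (if x \<in> S then x else P0)"
  define Q where "Q = (if y \<in> S then y else P0)"
  have PQ: "block_partition n a b P" "block_partition n a b Q" "S \<subseteq> {P, Q}"
    using S(2) P0 xy by (auto simp: P_def Q_def)
  obtain s where "s permutes {1..n}" "stabilises s P" "stabilises s Q" "s \<noteq> id"
    using two_block_partitions_common_stabiliser[OF PQ(1,2) ab] by blast
  then show False using S(3) PQ(3) unfolding trivial_common_stabiliser_def by blast
qed

theorem proposition2p4: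
  fixes n a b :: nat
  assumes "n = a * b" and "a = b + 2" and "b \<ge> 2"
  shows "base_size n a b = 3"
proof -
  let ?S = "{fibres n a (row_of b), fibres n a (diag_of b), fibres n a (twisted_row_of b)}"
  have n: "n = (b + 2) * b" using assms(1,2) by simp
  have parts: "\<forall>P\<in>?S. block_partition n a b P"
    using block_partition_rows block_partition_diags block_partition_twisted_rows assms(2,3) n
    by auto
  have "trivial_common_stabiliser n ?S"
    using stabiliser_rows_diags_twisted_rows_trivial assms(2,3) n
    unfolding trivial_common_stabiliser_def by blast
  moreover have "card ?S = 3" using rows_diags_twisted_rows_distinct assms(2,3) n by blast
  ultimately show ?thesis
    using base_size_eqI[of ?S 3] card_ge_3_if_trivial_common_stabiliser[OF assms(2)] parts by blast
qed

end
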